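(* Let $S$ be a finite nonempty set of natural numbers. (1) If $S$ has type $(p,q)$ with $p\geq3$, then some subset of $S$ of cardinality $|S|-1$ has type $(p-1,q)$; symmetrically, if $q\geq 3$ some subset of cardinality $|S|-1$ has type $(p,q-1)$. (2) If $S$ has type $(2,q)$, then some subset of $S$ of cardinality $|S|-1$ is a caterpillar or has a type $(p',q')$ with $p'+q'\leq q$; symmetrically, if $S$ has type $(p,2)$, some subset of cardinality $|S|-1$ is a caterpillar or has a type $(p',q')$ with $p'+q'\leq p$. (3) If $S$ has type $(p,q)$ with $p+q<|S|$, then some subset of $S$ of cardinality $|S|-1$ also has type $(p,q)$. (4) The caterpillars are exactly the finite subsets of $\mathbb N$ having no subset of type $(2,2)$.
   Context: For $m\in\mathbb N$ let $d(m)$ be the finite set of integers with $m=\sum_{i\in d(m)}2^i$. For a finite $S\subset\mathbb N$ with $|S|\geq2$, $s(S)=\max\{i:\exists x,y\in S,\ i\in d(x)\setminus d(y)\}$; with $S_0=\{x\in S:s(S)\notin d(x)\}$, $S_1=\{x\in S:s(S)\in d(x)\}$ (both nonempty), $(S_0,S_1)$ is the split of $S$, written $S=(S_0,S_1)$. Caterpillars: the empty set and singletons are caterpillars; a finite $S$ with $|S|\geq 2$ and split $(S_0,S_1)$ is a caterpillar iff one of $S_0,S_1$ is a singleton and the other a caterpillar. Every finite $S\subset\mathbb N$ that is not a caterpillar, with split $(L,R)$, has a type $t(S)\in\mathbb N\times\mathbb N$ defined recursively: $t(S)=(|L|,|R|)$ if $|L|,|R|\geq 2$; $t(S)=t(L)$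 if $|R|=1$; $t(S)=t(R)$ if $|L|=1$. *)

theory Defs
  imports Main
begin

definition digits :: "nat \<Rightarrow> nat set" where
  "digits m = {i. bit m i}"

definition split_pos :: "nat set \<Rightarrow> nat" where
  "split_pos S = Max {i. \<exists>x\<in>S. \<exists>y\<in>S. i \<in> digits x - digits y}"

definition split0 :: "nat set \<Rightarrow> nat set" where
  "split0 S = {x\<in>S. split_pos S \<notin> digits x}"

definition split1 :: "nat set \<Rightarrow> nat set" where
  "split1 S = {x\<in>S. split_pos S \<in> digits x}"

inductive caterpillar :: "nat set \<Rightarrow> bool" where
  cat_empty: "caterpillar {}"
| cat_single: "caterpillar {x}"
| cat_left: "\<lbrakk>finite S; card S \<ge> 2; card (split0 S) = 1; caterpillar (split1 S)\<rbrakk>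
              \<Longrightarrow> caterpillar S"
| cat_right: "\<lbrakk>finite S; card S \<ge> 2; card (split1 S) = 1; caterpillar (split0 S)\<rbrakk>
              \<Longrightarrow> caterpillar S"

text \<open>has_type S t means t(S) = t (defined only for non-caterpillars).\<close>
inductive has_type :: "nat set \<Rightarrow> nat \<times> nat \<Rightarrow> bool" where
  ty_base: "\<lbrakk>finite S; card S \<ge> 2; card (split0 S) \<ge> 2; card (split1 S) \<ge> 2\<rbrakk>
              \<Longrightarrow> has_type S (card (split0 S), card (split1 S))"
| ty_left: "\<lbrakk>finite S; card S \<ge> 2; card (split1 S) = 1; has_type (split0 S) t\<rbrakk>
              \<Longrightarrow> has_type S t"
| ty_right: "\<lbrakk>finite S; card S \<ge> 2; card (split0 S) = 1; has_type (split1 S) t\<rbrakk>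
              \<Longrightarrow> has_type S t"

end

theory Submission imports Defs begin

text \<open>
  A type is read off a core of S, reached by descending through splits with a singleton side
  until both sides have at least two elements. Removing an element from one side of a split
  leaves the split position unchanged as long as both sides stay nonempty, so removing an
  element of S from a side of the core changes only that side's count, and the descent through
  singleton sides survives the removal. For (2), removing one of the two elements on the small
  side of a (2,q) core makes that side a singleton, so the rest descends into the other side,
  a set of q elements. For (3), p + q < |S| means the top split of S has a singleton side, which
  can be dropped. Iterating (1) lowers every type to (2,2); conversely
  subsets of caterpillars are caterpillars, and a typed set is never one, which gives (4).
\<close>

lemma bit_nat_less:
  assumes "bit (m::nat) i" shows "i < m"
proof (rule ccontr)
  assume "\<not> i < m"
  then have "m < 2 ^ i" using less_exp[of i] by linarith
  with assms show False by (simp add: bit_nat_def)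
qed

definition diff_digits :: "nat set \<Rightarrow> nat set" where
  "diff_digits S = {i. \<exists>x\<in>S. \<exists>y\<in>S. i \<in> digits x - digits y}"

lemma split_pos_eq_Max: "split_pos S = Max (diff_digits S)"
  by (simp add: split_pos_def diff_digits_def)

lemma finite_diff_digits:
  assumes "finite S" shows "finite (diff_digits S)"
proof -
  have "diff_digits S \<subseteq> {..< Max S}"
  proof
    fix i assume "i \<in> diff_digits S"
    then obtain x where "x \<in> S" "bit x i" by (auto simp: diff_digits_def digits_def)
    then show "i \<in> {..< Max S}" using bit_nat_less[of x i] Max_ge[OF assms, of x] by auto
  qed
  then show ?thesis using finite_subset by blast
qed

lemma split_pos_in_diff_digits:
  assumes "finite S" "card S \<ge> 2"
  shows "split_pos S \<in> diff_digits S"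
proof -
  have "\<exists>x\<in>S. \<exists>y\<in>S. x \<noteq> y" using assms card_le_Suc0_iff_eq by fastforce
  then obtain x y where "x \<in> S" "y \<in> S" "x \<noteq> y" by blast
  then obtain i where "bit x i \<noteq> bit y i" using bit_eq_iff by blast
  with \<open>x \<in> S\<close> \<open>y \<in> S\<close> have "diff_digits S \<noteq> {}"
    by (auto simp: diff_digits_def digits_def)
  then show ?thesis
    unfolding split_pos_eq_Max by (rule Max_in[OF finite_diff_digits[OF assms(1)]])
qed

lemma split_nonempty:
  assumes "finite S" "card S \<ge> 2"
  shows "split0 S \<noteq> {}" "split1 S \<noteq> {}"
  using split_pos_in_diff_digits[OF assms]
  by (auto simp: diff_digits_def split0_def split1_def)

lemma split_Un: "split0 S \<union> split1 S = S"
  and split_disjoint: "split0 S \<inter> split1 S = {}"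
  and split0_subset: "split0 S \<subseteq> S"
  and split1_subset: "split1 S \<subseteq> S"
  by (auto simp: split0_def split1_def)

lemma card_split: "finite S \<Longrightarrow> card (split0 S) + card (split1 S) = card S"
  by (metis card_Un_disjoint finite_subset split0_subset split1_subset split_Un split_disjoint)

lemma Diff_singleton_nonempty_if_card_ge2:
  assumes "card A \<ge> 2" shows "A - {x} \<noteq> {}"
proof
  assume "A - {x} = {}"
  then have "card A \<le> card {x}" by (intro card_mono) auto
  with assms show False by simp
qed

lemma card_ge2_if_split_nonempty:
  assumes "finite S" "split0 S \<noteq> {}" "split1 S \<noteq> {}"
  shows "card S \<ge> 2"
proof -
  have "card (split0 S) \<ge> 1" "card (split1 S) \<ge> 1"
    using assms finite_subset[OF split0_subset] finite_subset[OF split1_subset]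
    by (auto simp: Suc_le_eq card_gt_0_iff)
  then show ?thesis using card_split[OF assms(1)] by simp
qed

lemma split_subset:
  assumes "finite S" "T \<subseteq> S" "T \<inter> split0 S \<noteq> {}" "T \<inter> split1 S \<noteq> {}"
  shows "split0 T = T \<inter> split0 S" "split1 T = T \<inter> split1 S"
proof -
  have "split_pos S \<in> diff_digits T"
    using assms(3,4) by (auto simp: diff_digits_def split0_def split1_def)
  moreover have "i \<le> split_pos S" if "i \<in> diff_digits T" for i
  proof -
    have "i \<in> diff_digits S" using that assms(2) by (auto simp: diff_digits_def)
    then show ?thesis using finite_diff_digits[OF assms(1)] by (simp add: split_pos_eq_Max)
  qed
  moreover have "finite (diff_digits T)"
    using finite_diff_digits assms(1,2) finite_subset by blast
  ultimately have "Max (diff_digits T) = split_pos S" by (intro Max_eqI)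
  then have "split_pos T = split_pos S" by (simp add: split_pos_eq_Max)
  then show "split0 T = T \<inter> split0 S" "split1 T = T \<inter> split1 S"
    using assms(2) by (auto simp: split0_def split1_def)
qed

lemma split_Diff0:
  assumes "finite S" "x \<in> split0 S" "split0 S - {x} \<noteq> {}" "split1 S \<noteq> {}"
  shows "split0 (S - {x}) = split0 S - {x}" "split1 (S - {x}) = split1 S" "card (S - {x}) \<ge> 2"
proof -
  have "x \<notin> split1 S" using assms(2) split_disjoint by blast
  then have "(S - {x}) \<inter> split0 S = split0 S - {x}" "(S - {x}) \<inter> split1 S = split1 S"
    using split_Un by auto
  then show eqs: "split0 (S - {x}) = split0 S - {x}" "split1 (S - {x}) = split1 S"
    using split_subset[OF assms(1), of "S - {x}"] assms(3,4) by auto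
  show "card (S - {x}) \<ge> 2"
    by (rule card_ge2_if_split_nonempty) (use assms(1,3,4) eqs in auto)
qed

lemma split_Diff1:
  assumes "finite S" "x \<in> split1 S" "split1 S - {x} \<noteq> {}" "split0 S \<noteq> {}"
  shows "split0 (S - {x}) = split0 S" "split1 (S - {x}) = split1 S - {x}" "card (S - {x}) \<ge> 2"
proof -
  have "x \<notin> split0 S" using assms(2) split_disjoint by blast
  then have "(S - {x}) \<inter> split0 S = split0 S" "(S - {x}) \<inter> split1 S = split1 S - {x}"
    using split_Un by auto
  then show eqs: "split0 (S - {x}) = split0 S" "split1 (S - {x}) = split1 S - {x}"
    using split_subset[OF assms(1), of "S - {x}"] assms(3,4) by auto
  show "card (S - {x}) \<ge> 2"
    by (rule card_ge2_if_split_nonempty) (use assms(1,3,4) eqs in auto)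
qed

lemma lift_Diff_split0:
  assumes "finite S" "card (split1 S) = 1" "x \<in> split0 S" "split0 S - {x} \<noteq> {}"
    and closed: "\<And>T. \<lbrakk>finite T; card T \<ge> 2; card (split1 T) = 1; P (split0 T)\<rbrakk> \<Longrightarrow> P T"
    and "P (split0 S - {x})"
  shows "P (S - {x})"
proof -
  have "split1 S \<noteq> {}" using assms(2) by auto
  note eqs = split_Diff0[OF assms(1,3,4) this]
  show ?thesis using closed[of "S - {x}"] eqs assms(1,2,6) by simp
qed

lemma lift_Diff_split1:
  assumes "finite S" "card (split0 S) = 1" "x \<in> split1 S" "split1 S - {x} \<noteq> {}"
    and closed: "\<And>T. \<lbrakk>finite T; card T \<ge> 2; card (split0 T) = 1; P (split1 T)\<rbrakk> \<Longrightarrow> P T"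
    and "P (split1 S - {x})"
  shows "P (S - {x})"
proof -
  have "split0 S \<noteq> {}" using assms(2) by auto
  note eqs = split_Diff1[OF assms(1,3,4) this]
  show ?thesis using closed[of "S - {x}"] eqs assms(1,2,6) by simp
qed

lemma has_type_card: "has_type S t \<Longrightarrow> finite S \<and> card S \<ge> 2"
  by (induction rule: has_type.induct) auto

lemma has_type_nonempty: "has_type S t \<Longrightarrow> S \<noteq> {}"
  using has_type_card by fastforce

lemma has_type_le_card: "has_type S (p, q) \<Longrightarrow> p + q \<le> card S"
  by (induction S "(p, q)" rule: has_type.induct) (use card_split in fastforce)+

lemma has_type_ge2: "has_type S (p, q) \<Longrightarrow> 2 \<le> p \<and> 2 \<le> q"
  by (induction S "(p, q)" rule: has_type.induct) auto

lemma has_type_not_caterpillar: "has_type S t \<Longrightarrow> \<not> caterpillar S"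
proof (induction rule: has_type.induct)
  case (ty_base S)
  then show ?case by (auto elim: caterpillar.cases)
next
  case (ty_left S t)
  then show ?case using has_type_card[OF ty_left.hyps(4)] by (auto elim: caterpillar.cases)
next
  case (ty_right S t)
  then show ?case using has_type_card[OF ty_right.hyps(4)] by (auto elim: caterpillar.cases)
qed

lemma has_type_if_not_caterpillar:
  "finite S \<Longrightarrow> \<not> caterpillar S \<Longrightarrow> \<exists>t. has_type S t"
proof (induction "card S" arbitrary: S rule: less_induct)
  case less
  have card_S: "card S \<ge> 2"
  proof (rule ccontr)
    assume "\<not> card S \<ge> 2"
    then have "card S = 0 \<or> card S = 1" by linarith
    then show False
      using less.prems by (auto simp: card_1_singleton_iff intro: caterpillar.intros)
  qed
  have fin: "finite (split0 S)" "finite (split1 S)"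
    using less.prems(1) finite_subset split0_subset split1_subset by metis+
  have "card (split0 S) \<ge> 1" "card (split1 S) \<ge> 1"
    using split_nonempty[OF less.prems(1) card_S] fin by (auto simp: Suc_le_eq card_gt_0_iff)
  then have "card (split0 S) = 1 \<or> card (split1 S) = 1
      \<or> card (split0 S) \<ge> 2 \<and> card (split1 S) \<ge> 2" by linarith
  then consider "card (split0 S) = 1" | "card (split1 S) = 1"
    | "card (split0 S) \<ge> 2" "card (split1 S) \<ge> 2" by blast
  then show ?case
  proof cases
    case 1
    then have "\<not> caterpillar (split1 S)" using less.prems card_S cat_left by blast
    moreover have "card (split1 S) < card S" using 1 card_split[OF less.prems(1)] by simp
    ultimately obtain t where "has_type (split1 S) t" using less.hyps fin by blast
    then show ?thesis using ty_right less.prems(1) card_S 1 by blast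
  next
    case 2
    then have "\<not> caterpillar (split0 S)" using less.prems card_S cat_right by blast
    moreover have "card (split0 S) < card S" using 2 card_split[OF less.prems(1)] by simp
    ultimately obtain t where "has_type (split0 S) t" using less.hyps fin by blast
    then show ?thesis using ty_left less.prems(1) card_S 2 by blast
  next
    case 3
    then show ?thesis using ty_base[OF less.prems(1) card_S] by blast
  qed
qed

lemma caterpillar_subset: "caterpillar S \<Longrightarrow> T \<subseteq> S \<Longrightarrow> caterpillar T"
proof (induction arbitrary: T rule: caterpillar.induct)
  case cat_empty
  then show ?case by (simp add: caterpillar.cat_empty)
next
  case (cat_single x)
  then show ?case by (metis caterpillar.cat_empty caterpillar.cat_single subset_singletonD)
next
  case (cat_left S)
  obtain a where a: "split0 S = {a}" using cat_left.hyps(3) by (rule card_1_singletonE)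
  have T: "T \<subseteq> insert a (split1 S)" using cat_left.prems a split_Un[of S] by blast
  consider "T \<subseteq> split1 S" | "T = {a}" | "a \<in> T" "T \<inter> split1 S \<noteq> {}" using T by blast
  then show ?case
  proof cases
    case 1
    then show ?thesis by (rule cat_left.IH)
  next
    case 2
    then show ?thesis by (simp add: caterpillar.cat_single)
  next
    case 3
    have fin: "finite T" using cat_left.prems cat_left.hyps(1) finite_subset by blast
    have "T \<inter> split0 S \<noteq> {}" using a 3(1) by blast
    note eqs = split_subset[OF cat_left.hyps(1) cat_left.prems this 3(2)]
    have "split0 T = {a}" using eqs(1) a 3(1) by blast
    moreover have "card T \<ge> 2"
      by (rule card_ge2_if_split_nonempty[OF fin]) (use eqs 3 a in auto)
    moreover have "caterpillar (split1 T)" using cat_left.IH eqs(2) by simp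
    ultimately show ?thesis using caterpillar.cat_left[OF fin] by simp
  qed
next
  case (cat_right S)
  obtain a where a: "split1 S = {a}" using cat_right.hyps(3) by (rule card_1_singletonE)
  have T: "T \<subseteq> insert a (split0 S)" using cat_right.prems a split_Un[of S] by blast
  consider "T \<subseteq> split0 S" | "T = {a}" | "a \<in> T" "T \<inter> split0 S \<noteq> {}" using T by blast
  then show ?case
  proof cases
    case 1
    then show ?thesis by (rule cat_right.IH)
  next
    case 2
    then show ?thesis by (simp add: caterpillar.cat_single)
  next
    case 3
    have fin: "finite T" using cat_right.prems cat_right.hyps(1) finite_subset by blast
    have "T \<inter> split1 S \<noteq> {}" using a 3(1) by blast
    note eqs = split_subset[OF cat_right.hyps(1) cat_right.prems 3(2) this]
    have "split1 T = {a}" using eqs(2) a 3(1) by blast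
    moreover have "card T \<ge> 2"
      by (rule card_ge2_if_split_nonempty[OF fin]) (use eqs 3 a in auto)
    moreover have "caterpillar (split0 T)" using cat_right.IH eqs(1) by simp
    ultimately show ?thesis using caterpillar.cat_right[OF fin] by simp
  qed
qed

lemma has_type_Diff_split0:
  assumes "finite S" "card (split1 S) = 1" "x \<in> split0 S" "has_type (split0 S - {x}) t"
  shows "has_type (S - {x}) t"
  using lift_Diff_split0[where P = "\<lambda>A. has_type A t", OF assms(1-3) _ ty_left assms(4)]
    has_type_nonempty[OF assms(4)] by blast

lemma has_type_Diff_split1:
  assumes "finite S" "card (split0 S) = 1" "x \<in> split1 S" "has_type (split1 S - {x}) t"
  shows "has_type (S - {x}) t"
  using lift_Diff_split1[where P = "\<lambda>A. has_type A t", OF assms(1-3) _ ty_right assms(4)]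
    has_type_nonempty[OF assms(4)] by blast

lemma has_type_Diff_base0:
  assumes "finite S" "card (split0 S) \<ge> 3" "card (split1 S) \<ge> 2" "x \<in> split0 S"
  shows "has_type (S - {x}) (card (split0 S) - 1, card (split1 S))"
proof -
  have "finite (split0 S)" using assms(1) split0_subset by (rule finite_subset[rotated])
  then have card0: "card (split0 S - {x}) = card (split0 S) - 1" using assms(4) by simp
  have "split0 S - {x} \<noteq> {}"
    using assms(2) by (intro Diff_singleton_nonempty_if_card_ge2) simp
  moreover have "split1 S \<noteq> {}" using assms(3) by auto
  ultimately show ?thesis
    using split_Diff0[OF assms(1,4)] ty_base[of "S - {x}"] assms(1-3) card0 by simp
qed

lemma has_type_Diff_base1:
  assumes "finite S" "card (split0 S) \<ge> 2" "card (split1 S) \<ge> 3" "x \<in> split1 S"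
  shows "has_type (S - {x}) (card (split0 S), card (split1 S) - 1)"
proof -
  have "finite (split1 S)" using assms(1) split1_subset by (rule finite_subset[rotated])
  then have card1: "card (split1 S - {x}) = card (split1 S) - 1" using assms(4) by simp
  have "split1 S - {x} \<noteq> {}"
    using assms(3) by (intro Diff_singleton_nonempty_if_card_ge2) simp
  moreover have "split0 S \<noteq> {}" using assms(2) by auto
  ultimately show ?thesis
    using split_Diff1[OF assms(1,4)] ty_base[of "S - {x}"] assms(1-3) card1 by simp
qed

lemma has_type_Diff_left:
  "has_type S (p, q) \<Longrightarrow> 3 \<le> p \<Longrightarrow> \<exists>x\<in>S. has_type (S - {x}) (p - 1, q)"
proof (induction S "(p, q)" rule: has_type.induct)
  case (ty_base S)
  obtain x where "x \<in> split0 S" using split_nonempty[OF ty_base.hyps(1,2)] by blast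
  then show ?case using has_type_Diff_base0[OF ty_base.hyps(1)] ty_base split0_subset by blast
next
  case (ty_left S)
  then obtain x where "x \<in> split0 S" "has_type (split0 S - {x}) (p - 1, q)" by blast
  then show ?case using has_type_Diff_split0[OF ty_left.hyps(1,3)] split0_subset by blast
next
  case (ty_right S)
  then obtain x where "x \<in> split1 S" "has_type (split1 S - {x}) (p - 1, q)" by blast
  then show ?case using has_type_Diff_split1[OF ty_right.hyps(1,3)] split1_subset by blast
qed

lemma has_type_Diff_right:
  "has_type S (p, q) \<Longrightarrow> 3 \<le> q \<Longrightarrow> \<exists>x\<in>S. has_type (S - {x}) (p, q - 1)"
proof (induction S "(p, q)" rule: has_type.induct)
  case (ty_base S)
  obtain x where "x \<in> split1 S" using split_nonempty[OF ty_base.hyps(1,2)] by blast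
  then show ?case using has_type_Diff_base1[OF ty_base.hyps(1)] ty_base split1_subset by blast
next
  case (ty_left S)
  then obtain x where "x \<in> split0 S" "has_type (split0 S - {x}) (p, q - 1)" by blast
  then show ?case using has_type_Diff_split0[OF ty_left.hyps(1,3)] split0_subset by blast
next
  case (ty_right S)
  then obtain x where "x \<in> split1 S" "has_type (split1 S - {x}) (p, q - 1)" by blast
  then show ?case using has_type_Diff_split1[OF ty_right.hyps(1,3)] split1_subset by blast
qed

definition caterpillar_or_type_le :: "nat \<Rightarrow> nat set \<Rightarrow> bool" where
  "caterpillar_or_type_le n T \<longleftrightarrow> caterpillar T \<or> (\<exists>p q. has_type T (p, q) \<and> p + q \<le> n)"

lemma caterpillar_or_type_le_card:
  assumes "finite A" "card A \<le> n"
  shows "caterpillar_or_type_le n A"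
proof (cases "caterpillar A")
  case False
  then obtain p q where "has_type A (p, q)"
    using has_type_if_not_caterpillar[OF assms(1)] by (metis surj_pair)
  moreover have "p + q \<le> n" using has_type_le_card[OF calculation] assms(2) by simp
  ultimately show ?thesis unfolding caterpillar_or_type_le_def by blast
qed (simp add: caterpillar_or_type_le_def)

lemma caterpillar_or_type_le_of_split0:
  assumes "finite T" "card T \<ge> 2" "card (split1 T) = 1" "caterpillar_or_type_le n (split0 T)"
  shows "caterpillar_or_type_le n T"
  using assms cat_right[OF assms(1-3)] ty_left[OF assms(1-3)]
  unfolding caterpillar_or_type_le_def by blast

lemma caterpillar_or_type_le_of_split1:
  assumes "finite T" "card T \<ge> 2" "card (split0 T) = 1" "caterpillar_or_type_le n (split1 T)"
  shows "caterpillar_or_type_le n T"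
  using assms cat_left[OF assms(1-3)] ty_right[OF assms(1-3)]
  unfolding caterpillar_or_type_le_def by blast

lemma caterpillar_or_type_le_Diff_base0:
  assumes "finite S" "card (split0 S) = 2" "split1 S \<noteq> {}" "x \<in> split0 S"
  shows "caterpillar_or_type_le (card (split1 S)) (S - {x})"
proof -
  have "finite (split0 S)" using assms(1) split0_subset by (rule finite_subset[rotated])
  then have card0: "card (split0 S - {x}) = 1" using assms(2,4) by simp
  have "split0 S - {x} \<noteq> {}"
    using assms(2) by (intro Diff_singleton_nonempty_if_card_ge2) simp
  note eqs = split_Diff0[OF assms(1,4) this assms(3)]
  have "finite (split1 S)" using assms(1) split1_subset by (rule finite_subset[rotated])
  then have "caterpillar_or_type_le (card (split1 S)) (split1 S)"
    by (simp add: caterpillar_or_type_le_card)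
  then show ?thesis
    using caterpillar_or_type_le_of_split1[of "S - {x}"] eqs assms(1) card0 by simp
qed

lemma caterpillar_or_type_le_Diff_base1:
  assumes "finite S" "card (split1 S) = 2" "split0 S \<noteq> {}" "x \<in> split1 S"
  shows "caterpillar_or_type_le (card (split0 S)) (S - {x})"
proof -
  have "finite (split1 S)" using assms(1) split1_subset by (rule finite_subset[rotated])
  then have card1: "card (split1 S - {x}) = 1" using assms(2,4) by simp
  have "split1 S - {x} \<noteq> {}"
    using assms(2) by (intro Diff_singleton_nonempty_if_card_ge2) simp
  note eqs = split_Diff1[OF assms(1,4) this assms(3)]
  have "finite (split0 S)" using assms(1) split0_subset by (rule finite_subset[rotated])
  then have "caterpillar_or_type_le (card (split0 S)) (split0 S)"
    by (simp add: caterpillar_or_type_le_card)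
  then show ?thesis
    using caterpillar_or_type_le_of_split0[of "S - {x}"] eqs assms(1) card1 by simp
qed

lemma caterpillar_or_type_le_Diff_split0:
  assumes "finite S" "card (split1 S) = 1" "x \<in> split0 S" "split0 S - {x} \<noteq> {}"
    "caterpillar_or_type_le n (split0 S - {x})"
  shows "caterpillar_or_type_le n (S - {x})"
  by (rule lift_Diff_split0[where P = "caterpillar_or_type_le n",
        OF assms(1-4) caterpillar_or_type_le_of_split0 assms(5)])

lemma caterpillar_or_type_le_Diff_split1:
  assumes "finite S" "card (split0 S) = 1" "x \<in> split1 S" "split1 S - {x} \<noteq> {}"
    "caterpillar_or_type_le n (split1 S - {x})"
  shows "caterpillar_or_type_le n (S - {x})"
  by (rule lift_Diff_split1[where P = "caterpillar_or_type_le n",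
        OF assms(1-4) caterpillar_or_type_le_of_split1 assms(5)])

lemma caterpillar_or_type_le_Diff_left:
  "has_type S (2, q) \<Longrightarrow> \<exists>x\<in>S. caterpillar_or_type_le q (S - {x})"
proof (induction S "(2::nat, q)" rule: has_type.induct)
  case (ty_base S)
  obtain x where "x \<in> split0 S" using split_nonempty[OF ty_base.hyps(1,2)] by blast
  then show ?case
    using caterpillar_or_type_le_Diff_base0[OF ty_base.hyps(1)] ty_base split0_subset by fastforce
next
  case (ty_left S)
  then obtain x where x: "x \<in> split0 S" "caterpillar_or_type_le q (split0 S - {x})" by blast
  have "split0 S - {x} \<noteq> {}"
    using has_type_card[OF ty_left.hyps(4)] by (intro Diff_singleton_nonempty_if_card_ge2) simp
  then show ?case
    using caterpillar_or_type_le_Diff_split0[OF ty_left.hyps(1,3)] x split0_subset by blast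
next
  case (ty_right S)
  then obtain x where x: "x \<in> split1 S" "caterpillar_or_type_le q (split1 S - {x})" by blast
  have "split1 S - {x} \<noteq> {}"
    using has_type_card[OF ty_right.hyps(4)] by (intro Diff_singleton_nonempty_if_card_ge2) simp
  then show ?case
    using caterpillar_or_type_le_Diff_split1[OF ty_right.hyps(1,3)] x split1_subset by blast
qed

lemma caterpillar_or_type_le_Diff_right:
  "has_type S (p, 2) \<Longrightarrow> \<exists>x\<in>S. caterpillar_or_type_le p (S - {x})"
proof (induction S "(p, 2::nat)" rule: has_type.induct)
  case (ty_base S)
  obtain x where "x \<in> split1 S" using split_nonempty[OF ty_base.hyps(1,2)] by blast
  then show ?case
    using caterpillar_or_type_le_Diff_base1[OF ty_base.hyps(1)] ty_base split1_subset by fastforce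
next
  case (ty_left S)
  then obtain x where x: "x \<in> split0 S" "caterpillar_or_type_le p (split0 S - {x})" by blast
  have "split0 S - {x} \<noteq> {}"
    using has_type_card[OF ty_left.hyps(4)] by (intro Diff_singleton_nonempty_if_card_ge2) simp
  then show ?case
    using caterpillar_or_type_le_Diff_split0[OF ty_left.hyps(1,3)] x split0_subset by blast
next
  case (ty_right S)
  then obtain x where x: "x \<in> split1 S" "caterpillar_or_type_le p (split1 S - {x})" by blast
  have "split1 S - {x} \<noteq> {}"
    using has_type_card[OF ty_right.hyps(4)] by (intro Diff_singleton_nonempty_if_card_ge2) simp
  then show ?case
    using caterpillar_or_type_le_Diff_split1[OF ty_right.hyps(1,3)] x split1_subset by blast
qed

lemma has_type_subset_card_minus_one:
  assumes "has_type S (p, q)" "p + q < card S"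
  shows "\<exists>T\<subseteq>S. card T = card S - 1 \<and> has_type T (p, q)"
  using assms(1)
proof cases
  case ty_base
  then show ?thesis using card_split[of S] assms(2) by simp
next
  case ty_left
  then have "card (split0 S) = card S - 1" using card_split[of S] by simp
  then show ?thesis using split0_subset[of S] ty_left by blast
next
  case ty_right
  then have "card (split1 S) = card S - 1" using card_split[of S] by simp
  then show ?thesis using split1_subset[of S] ty_right by blast
qed

lemma has_type_subset_22: "has_type S (p, q) \<Longrightarrow> \<exists>T\<subseteq>S. has_type T (2, 2)"
proof (induction "p + q" arbitrary: S p q rule: less_induct)
  case less
  have "2 \<le> p" "2 \<le> q" using has_type_ge2[OF less.prems] by auto
  then consider "3 \<le> p" | "3 \<le> q" | "p = 2" "q = 2" by linarith
  then show ?case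
  proof cases
    case 1
    then obtain x where "has_type (S - {x}) (p - 1, q)"
      using has_type_Diff_left[OF less.prems] by blast
    then show ?thesis using less.hyps[of "p - 1" q "S - {x}"] 1 by auto
  next
    case 2
    then obtain x where "has_type (S - {x}) (p, q - 1)"
      using has_type_Diff_right[OF less.prems] by blast
    then show ?thesis using less.hyps[of p "q - 1" "S - {x}"] 2 by auto
  next
    case 3
    then show ?thesis using less.prems by blast
  qed
qed

lemma caterpillar_iff_no_subset_22:
  assumes "finite S"
  shows "caterpillar S \<longleftrightarrow> \<not> (\<exists>T\<subseteq>S. has_type T (2, 2))"
proof
  assume "caterpillar S"
  then show "\<not> (\<exists>T\<subseteq>S. has_type T (2, 2))"
    using caterpillar_subset has_type_not_caterpillar by blast
next
  assume "\<not> (\<exists>T\<subseteq>S. has_type T (2, 2))"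
  then show "caterpillar S"
    using has_type_if_not_caterpillar[OF assms] has_type_subset_22 by (metis surj_pair)
qed

theorem mainTheorem7:
  fixes S :: "nat set"
  assumes "finite S" and "S \<noteq> {}"
  shows
   "(\<forall>p q. has_type S (p, q) \<and> p \<ge> 3 \<longrightarrow>
        (\<exists>T\<subseteq>S. card T = card S - 1 \<and> has_type T (p - 1, q))) \<and>
    (\<forall>p q. has_type S (p, q) \<and> q \<ge> 3 \<longrightarrow>
        (\<exists>T\<subseteq>S. card T = card S - 1 \<and> has_type T (p, q - 1))) \<and>
    (\<forall>q. has_type S (2, q) \<longrightarrow>
        (\<exists>T\<subseteq>S. card T = card S - 1 \<and>
            (caterpillar T \<or> (\<exists>p' q'. has_type T (p', q') \<and> p' + q' \<le> q)))) \<and>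
    (\<forall>p. has_type S (p, 2) \<longrightarrow>
        (\<exists>T\<subseteq>S. card T = card S - 1 \<and>
            (caterpillar T \<or> (\<exists>p' q'. has_type T (p', q') \<and> p' + q' \<le> p)))) \<and>
    (\<forall>p q. has_type S (p, q) \<and> p + q < card S \<longrightarrow>
        (\<exists>T\<subseteq>S. card T = card S - 1 \<and> has_type T (p, q))) \<and>
    (caterpillar S \<longleftrightarrow> \<not> (\<exists>T\<subseteq>S. has_type T (2, 2)))"
proof (intro conjI allI impI)
  fix p q assume "has_type S (p, q) \<and> p \<ge> 3"
  then obtain x where "x \<in> S" "has_type (S - {x}) (p - 1, q)" using has_type_Diff_left by blast
  then show "\<exists>T\<subseteq>S. card T = card S - 1 \<and> has_type T (p - 1, q)"
    using assms(1) by (intro exI[of _ "S - {x}"]) auto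
next
  fix p q assume "has_type S (p, q) \<and> q \<ge> 3"
  then obtain x where "x \<in> S" "has_type (S - {x}) (p, q - 1)" using has_type_Diff_right by blast
  then show "\<exists>T\<subseteq>S. card T = card S - 1 \<and> has_type T (p, q - 1)"
    using assms(1) by (intro exI[of _ "S - {x}"]) auto
next
  fix q assume "has_type S (2, q)"
  then obtain x where "x \<in> S" "caterpillar_or_type_le q (S - {x})"
    using caterpillar_or_type_le_Diff_left by blast
  then show "\<exists>T\<subseteq>S. card T = card S - 1 \<and>
      (caterpillar T \<or> (\<exists>p' q'. has_type T (p', q') \<and> p' + q' \<le> q))"
    using assms(1) unfolding caterpillar_or_type_le_def by (intro exI[of _ "S - {x}"]) auto
next
  fix p assume "has_type S (p, 2)"
  then obtain x where "x \<in> S" "caterpillar_or_type_le p (S - {x})"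
    using caterpillar_or_type_le_Diff_right by blast
  then show "\<exists>T\<subseteq>S. card T = card S - 1 \<and>
      (caterpillar T \<or> (\<exists>p' q'. has_type T (p', q') \<and> p' + q' \<le> p))"
    using assms(1) unfolding caterpillar_or_type_le_def by (intro exI[of _ "S - {x}"]) auto
next
  fix p q assume "has_type S (p, q) \<and> p + q < card S"
  then show "\<exists>T\<subseteq>S. card T = card S - 1 \<and> has_type T (p, q)"
    using has_type_subset_card_minus_one by blast
next
  show "caterpillar S \<longleftrightarrow> \<not> (\<exists>T\<subseteq>S. has_type T (2, 2))"
    by (rule caterpillar_iff_no_subset_22[OF assms(1)])
qed

end
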